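(* Let $P$ be a countable unital left cancellative semigroup, let $S$ be the inverse semigroup $\{v_{p_1}^*v_{q_1}\cdots v_{p_n}^*v_{q_n}: n\ge1,\ p_i,q_i\in P\}\cup\{0\}$ in $C^*(P)$ with idempotent semilattice $E=\{e_X:X\in\mathcal{J}(P)\}$, and let $\widehat{E}$ be the spectrum of $E$. Let $s\in S$ and let $\phi\in\widehat{E}$ be such that for all $X,Y\in\mathcal{J}(P)$ with $X\cup Y\in\mathcal{J}(P)$ one has $\phi(e_{X\cup Y})=\phi(e_X)+\phi(e_Y)-\phi(e_{X\cap Y})$. Then for all $X,Y\in\mathcal{J}(P)$ with $X\cup Y\in\mathcal{J}(P)$, $$\phi(s^*e_{X\cup Y}s)=\phi(s^*e_Xs)+\phi(s^*e_Ys)-\phi(s^*e_{X\cap Y}s).$$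
   Context: For $p\in P$, $pX$ is the image of $X\subseteq P$ under $q\mapsto pq$ and $p^{-1}X=\{q\in P:pq\in X\}$. The constructible right ideals are $\mathcal{J}(P)=\{p_1^{-1}q_1\cdots p_n^{-1}q_nP: n\ge1,\ p_i,q_i\in P\}\cup\{\emptyset\}$. $C^*(P)$ is the universal unital C*-algebra generated by isometries $\{v_p\}_{p\in P}$ and projections $\{e_X\}_{X\in\mathcal{J}(P)}$ with $v_pv_q=v_{pq}$, $v_pe_Xv_p^*=e_{pX}$, $e_\emptyset=0$, $e_P=1$, and $e_Xe_Y=e_{X\cap Y}$. Note $s^*es\in E$ for $s\in S$, $e\in E$. The spectrum $\widehat{E}$ is the set of nonzero maps $\phi:E\to\{0,1\}$ with $\phi(0)=0$ and $\phi(ef)=\phi(e)\phi(f)$. *)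

theory Defs
  imports Main "HOL-Library.Countable_Set"
begin

(* P is modelled as a type 'a of class monoid_mult (unital semigroup);
   left cancellativity and countability are explicit hypotheses. *)

definition left_cancellative :: "'a::monoid_mult itself \<Rightarrow> bool" where
  "left_cancellative _ \<longleftrightarrow> (\<forall>p q r :: 'a. p * q = p * r \<longrightarrow> q = r)"

definition lmul :: "'a::monoid_mult \<Rightarrow> 'a set \<Rightarrow> 'a set" where
  "lmul p X = (\<lambda>q. p * q) ` X"

definition linv :: "'a::monoid_mult \<Rightarrow> 'a set \<Rightarrow> 'a set" where
  "linv p X = {q. p * q \<in> X}"

fun word_apply :: "('a::monoid_mult \<times> 'a) list \<Rightarrow> 'a set \<Rightarrow> 'a set" where
  "word_apply [] X = X"
| "word_apply ((p, q) # ws) X = linv p (lmul q (word_apply ws X))"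

definition constructible_ideals :: "'a::monoid_mult set set" where
  "constructible_ideals =
     {word_apply ws UNIV | ws. ws \<noteq> []} \<union> {{}}"

(* Elements of S are 0 (None) or words s = v_{p1}^* v_{q1} ... v_{pn}^* v_{qn}
   (Some [(p1,q1),...,(pn,qn)], n >= 1).  In C*(P) one has
   s^* e_X s = e_{conj_set s X} with
   conj_set s X = qn^{-1} pn ... q1^{-1} p1 X, and 0^* e_X 0 = 0 = e_{empty}. *)
fun conj_word :: "('a::monoid_mult \<times> 'a) list \<Rightarrow> 'a set \<Rightarrow> 'a set" where
  "conj_word [] X = X"
| "conj_word ((p, q) # ws) X = conj_word ws (linv q (lmul p X))"

definition S_elems :: "('a::monoid_mult \<times> 'a) list option set" where
  "S_elems = {None} \<union> {Some ws | ws. ws \<noteq> []}"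

definition conj_set :: "('a::monoid_mult \<times> 'a) list option \<Rightarrow> 'a set \<Rightarrow> 'a set" where
  "conj_set s X = (case s of None \<Rightarrow> {} | Some ws \<Rightarrow> conj_word ws X)"

(* Characters of E, with E identified with J(P) via e_X <-> X
   (e_{empty} = 0, e_X e_Y = e_{X \<inter> Y}); phi X stands for phi(e_X). *)
definition is_character :: "('a::monoid_mult set \<Rightarrow> int) \<Rightarrow> bool" where
  "is_character \<phi> \<longleftrightarrow>
     (\<forall>X \<in> constructible_ideals. \<phi> X \<in> {0, 1}) \<and>
     \<phi> {} = 0 \<and>
     (\<forall>X \<in> constructible_ideals. \<forall>Y \<in> constructible_ideals.
         \<phi> (X \<inter> Y) = \<phi> X * \<phi> Y) \<and>
     (\<exists>X \<in> constructible_ideals. \<phi> X \<noteq> 0)"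

end

theory Submission
  imports Defs
begin

text \<open>In \<open>C*(P)\<close> conjugation by \<open>s\<close> acts on idempotents through the map \<open>conj_set s\<close> on
  constructible ideals. This map preserves unions, and by left cancellativity (which makes
  \<open>X \<mapsto> pX\<close> injective) also intersections; moreover it sends \<open>\<J>(P)\<close> into itself. Hence the
  inclusion--exclusion identity satisfied by \<open>\<phi>\<close> on \<open>\<J>(P)\<close> transfers to \<open>\<phi>(s\<^sup>* _ s)\<close>.\<close>

lemma lmul_Un: "lmul p (X \<union> Y) = lmul p X \<union> lmul p Y"
  unfolding lmul_def by (rule image_Un)

lemma lmul_Int:
  assumes "inj ((*) p)"
  shows "lmul p (X \<inter> Y) = lmul p X \<inter> lmul p Y"
  unfolding lmul_def by (rule image_Int[OF assms])

lemma linv_Un: "linv p (X \<union> Y) = linv p X \<union> linv p Y"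
  unfolding linv_def by auto

lemma linv_Int: "linv p (X \<inter> Y) = linv p X \<inter> linv p Y"
  unfolding linv_def by auto

lemma left_cancellative_inj_mult:
  assumes "left_cancellative TYPE('a::monoid_mult)"
  shows "inj ((*) (p::'a))"
  using assms unfolding left_cancellative_def inj_def by blast

lemma conj_word_Un: "conj_word ws (X \<union> Y) = conj_word ws X \<union> conj_word ws Y"
  by (induction ws arbitrary: X Y) (auto simp: lmul_Un linv_Un)

lemma conj_word_Int:
  assumes "left_cancellative TYPE('a::monoid_mult)"
  shows "conj_word ws (X \<inter> Y) = conj_word ws X \<inter> conj_word ws (Y::'a set)"
  by (induction ws arbitrary: X Y)
    (auto simp: lmul_Int[OF left_cancellative_inj_mult[OF assms]] linv_Int)

lemma conj_word_empty: "conj_word ws {} = {}"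
  by (induction ws) (auto simp: linv_def lmul_def)

lemma word_apply_append: "word_apply (xs @ ys) X = word_apply xs (word_apply ys X)"
  by (induction xs) auto

lemma conj_word_eq_word_apply:
  "conj_word ws X = word_apply (rev (map (\<lambda>(p, q). (q, p)) ws)) X"
  by (induction ws arbitrary: X) (auto simp: word_apply_append)

lemma conj_word_constructible:
  assumes "X \<in> constructible_ideals"
  shows "conj_word ws X \<in> constructible_ideals"
proof -
  from assms consider "X = {}" | ws' where "ws' \<noteq> []" "X = word_apply ws' UNIV"
    unfolding constructible_ideals_def by blast
  then show ?thesis
  proof cases
    case 1
    then show ?thesis by (simp add: conj_word_empty constructible_ideals_def)
  next
    case 2
    then have "conj_word ws X = word_apply (rev (map (\<lambda>(p, q). (q, p)) ws) @ ws') UNIV"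
      by (simp add: conj_word_eq_word_apply word_apply_append)
    with \<open>ws' \<noteq> []\<close> show ?thesis
      unfolding constructible_ideals_def by blast
  qed
qed

lemma conj_set_Un: "conj_set s (X \<union> Y) = conj_set s X \<union> conj_set s Y"
  by (simp add: conj_set_def conj_word_Un split: option.split)

lemma conj_set_Int:
  assumes "left_cancellative TYPE('a::monoid_mult)"
  shows "conj_set s (X \<inter> Y) = conj_set s X \<inter> conj_set s (Y::'a set)"
  by (simp add: conj_set_def conj_word_Int[OF assms] split: option.split)

lemma conj_set_constructible:
  assumes "X \<in> constructible_ideals"
  shows "conj_set s X \<in> constructible_ideals"
  using assms conj_word_constructible
  by (auto simp: conj_set_def constructible_ideals_def split: option.split)

theorem mainTheorem2:
  fixes \<phi> :: "'a::monoid_mult set \<Rightarrow> int"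
    and s :: "('a \<times> 'a) list option"
  assumes "countable (UNIV :: 'a set)"
    and "left_cancellative TYPE('a)"
    and "s \<in> S_elems"
    and "is_character \<phi>"
    and "\<forall>X \<in> constructible_ideals. \<forall>Y \<in> constructible_ideals.
           X \<union> Y \<in> constructible_ideals \<longrightarrow>
           \<phi> (X \<union> Y) = \<phi> X + \<phi> Y - \<phi> (X \<inter> Y)"
  shows "\<forall>X \<in> constructible_ideals. \<forall>Y \<in> constructible_ideals.
           X \<union> Y \<in> constructible_ideals \<longrightarrow>
           \<phi> (conj_set s (X \<union> Y)) =
             \<phi> (conj_set s X) + \<phi> (conj_set s Y) - \<phi> (conj_set s (X \<inter> Y))"
proof (intro ballI impI)
  fix X Y :: "'a set"
  assume "X \<in> constructible_ideals" "Y \<in> constructible_ideals"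
    and "X \<union> Y \<in> constructible_ideals"
  then have "conj_set s X \<in> constructible_ideals" "conj_set s Y \<in> constructible_ideals"
    and "conj_set s X \<union> conj_set s Y \<in> constructible_ideals"
    by (simp_all add: conj_set_constructible flip: conj_set_Un)
  with assms(5) show "\<phi> (conj_set s (X \<union> Y)) =
      \<phi> (conj_set s X) + \<phi> (conj_set s Y) - \<phi> (conj_set s (X \<inter> Y))"
    by (simp add: conj_set_Un conj_set_Int[OF assms(2)])
qed

end
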